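(* Let $\mathcal{A}\in\mathcal{T}'_7$ with $c_{13}^4=c_{14}^5=c_{15}^6=c_{24}^5=c_{25}^6=c_{14}^6=c_{24}^6=c_{13}^6=0$ and $c_{13}^5c_{35}^6c_{46}^7\ne0$. Then the automorphisms of $\mathcal{A}$ are exactly the linear maps $\varphi$ with $\varphi(e_1)=e_1+a_{71}e_7$, $\varphi(e_2)=e_2+a_{72}e_7$, $\varphi(e_i)=e_i$ for $3\le i\le7$, where $a_{71},a_{72}\in\mathbb{C}$.
   Context: Over $\mathbb{C}$, basis $e_1,\dots,e_n$, $e_ie_j=\sum_kc_{ij}^ke_k$. For $n\ge3$, $\mathcal{T}'_n$ is the family of anticommutative algebra structures with $c_{ij}^k=0$ whenever $k\le\max\{i,j\}$ and $e_ie_{i+1}=e_{i+2}$ for $1\le i\le n-2$, other structure constants arbitrary subject to these and anticommutativity. *)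

theory Defs
  imports Complex_Main
begin

text \<open>Vectors of C^n are functions nat => complex supported on {1..n};
  e i is the i-th standard basis vector; c i j k is the structure constant c_{ij}^k.\<close>

definition vsp :: "nat \<Rightarrow> (nat \<Rightarrow> complex) set" where
  "vsp n = {x. \<forall>i. i \<notin> {1..n} \<longrightarrow> x i = 0}"

definition bvec :: "nat \<Rightarrow> nat \<Rightarrow> complex" where
  "bvec i = (\<lambda>k. if k = i then 1 else 0)"

definition alg_mult :: "nat \<Rightarrow> (nat \<Rightarrow> nat \<Rightarrow> nat \<Rightarrow> complex)
    \<Rightarrow> (nat \<Rightarrow> complex) \<Rightarrow> (nat \<Rightarrow> complex) \<Rightarrow> (nat \<Rightarrow> complex)" where
  "alg_mult n c x y = (\<lambda>k. if k \<in> {1..n}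
      then (\<Sum>i=1..n. \<Sum>j=1..n. x i * y j * c i j k) else 0)"

definition in_Tprime :: "nat \<Rightarrow> (nat \<Rightarrow> nat \<Rightarrow> nat \<Rightarrow> complex) \<Rightarrow> bool" where
  "in_Tprime n c \<longleftrightarrow> 3 \<le> n
    \<and> (\<forall>i\<in>{1..n}. \<forall>j\<in>{1..n}. \<forall>k\<in>{1..n}. c i j k = - c j i k)
    \<and> (\<forall>i\<in>{1..n}. \<forall>j\<in>{1..n}. \<forall>k\<in>{1..n}. k \<le> max i j \<longrightarrow> c i j k = 0)
    \<and> (\<forall>i. 1 \<le> i \<and> i \<le> n - 2 \<longrightarrow>
          (\<forall>k\<in>{1..n}. c i (i+1) k = (if k = i + 2 then 1 else 0)))"

definition lin_on :: "nat \<Rightarrow> ((nat \<Rightarrow> complex) \<Rightarrow> (nat \<Rightarrow> complex)) \<Rightarrow> bool" where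
  "lin_on n f \<longleftrightarrow> (\<forall>x\<in>vsp n. f x \<in> vsp n)
     \<and> (\<forall>x\<in>vsp n. \<forall>y\<in>vsp n. f (\<lambda>k. x k + y k) = (\<lambda>k. f x k + f y k))
     \<and> (\<forall>a. \<forall>x\<in>vsp n. f (\<lambda>k. a * x k) = (\<lambda>k. a * f x k))"

definition is_automorphism :: "nat \<Rightarrow> (nat \<Rightarrow> nat \<Rightarrow> nat \<Rightarrow> complex)
    \<Rightarrow> ((nat \<Rightarrow> complex) \<Rightarrow> (nat \<Rightarrow> complex)) \<Rightarrow> bool" where
  "is_automorphism n c f \<longleftrightarrow> lin_on n f \<and> bij_betw f (vsp n) (vsp n)
     \<and> (\<forall>x\<in>vsp n. \<forall>y\<in>vsp n. f (alg_mult n c x y) = alg_mult n c (f x) (f y))"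

end

theory Submission
  imports Defs
begin

(* Write f(e_i) = sum_k a_ki e_k. In an algebra of T'_n the k-th coordinate of a product
   involves only coordinates below k, and neither e_1 nor e_2 occurs in any product; hence every
   shear fixing e_3, ..., e_n and moving e_1, e_2 by multiples of e_n is an automorphism.
   Conversely, applying an automorphism f to e_(i+2) = e_i e_(i+1) shows that f(e_i) has no
   e_k-component for k < i when i >= 3, and that its e_i-component is a product of a_22 and the
   minor a_11 a_22 - a_12 a_21; since f(e_7) is then a multiple of e_7, injectivity makes all these
   diagonal entries nonzero. Comparing coordinates of f(e_i) f(e_j) = f(e_i e_j) for the remaining
   products, where c_13^5 c_35^6 c_46^7 <> 0 enters, forces the diagonal to be 1 and every other
   entry to vanish except a_71 and a_72. *)

(* Keeps the numeral 1 from being unfolded to Suc 0, so that facts about coordinate 1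
   remain applicable after simplification. *)
declare One_nat_def [simp del]

lemma sum_square_skew:
  fixes g :: "nat \<Rightarrow> nat \<Rightarrow> 'a::comm_monoid_add"
  assumes "\<forall>i\<in>{1..m}. g i i = 0"
  shows "(\<Sum>i=1..m. \<Sum>j=1..m. g i j) = (\<Sum>j=1..m. \<Sum>i=1..<j. g i j + g j i)"
  using assms
proof (induction m)
  case 0
  then show ?case by simp
next
  case (Suc m)
  have "(\<Sum>i=1..Suc m. \<Sum>j=1..Suc m. g i j)
      = (\<Sum>i=1..m. \<Sum>j=1..m. g i j) + (\<Sum>i=1..<Suc m. g i (Suc m) + g (Suc m) i)"
    using Suc.prems by (simp add: sum.distrib atLeastLessThanSuc_atLeastAtMost ac_simps)
  then show ?case using Suc by simp
qed

lemma in_Tprime_skew: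
  assumes "in_Tprime n c" "i \<in> {1..n}" "j \<in> {1..n}" "k \<in> {1..n}"
  shows "c i j k + c j i k = 0"
proof -
  have "c i j k = - c j i k" using assms unfolding in_Tprime_def by blast
  then show ?thesis by simp
qed

lemma in_Tprime_triangular:
  assumes "in_Tprime n c" "i \<in> {1..n}" "j \<in> {1..n}" "k \<in> {1..n}" "k \<le> max i j"
  shows "c i j k = 0"
proof -
  have "\<forall>i\<in>{1..n}. \<forall>j\<in>{1..n}. \<forall>k\<in>{1..n}. k \<le> max i j \<longrightarrow> c i j k = 0"
    using assms(1) unfolding in_Tprime_def by (elim conjE)
  then show ?thesis using assms(2-5) by blast
qed

lemma in_Tprime_consecutive:
  assumes "in_Tprime n c" "1 \<le> i" "i + 2 \<le> n" "k \<in> {1..n}"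
  shows "c i (i + 1) k = (if k = i + 2 then 1 else 0)"
proof -
  have "\<forall>i. 1 \<le> i \<and> i \<le> n - 2 \<longrightarrow> (\<forall>k\<in>{1..n}. c i (i+1) k = (if k = i + 2 then 1 else 0))"
    using assms(1) unfolding in_Tprime_def by (elim conjE)
  moreover have "1 \<le> i \<and> i \<le> n - 2" using assms(2,3) by simp
  ultimately show ?thesis using assms(4) by blast
qed
lemma alg_mult_in_Tprime:
  assumes T: "in_Tprime n c" and k: "k \<in> {1..n}"
  shows "alg_mult n c x y k = (\<Sum>j=1..<k. \<Sum>i=1..<j. c i j k * (x i * y j - x j * y i))"
proof -
  have skew: "c j i k = - c i j k" if "i \<in> {1..n}" "j \<in> {1..n}" for i j
    using in_Tprime_skew[OF T that k] by (simp add: eq_neg_iff_add_eq_0 add.commute)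
  have "c i i k = 0" if "i \<in> {1..n}" for i
    using in_Tprime_skew[OF T that that k] by simp
  then have "alg_mult n c x y k = (\<Sum>j=1..n. \<Sum>i=1..<j. x i * y j * c i j k + x j * y i * c j i k)"
    unfolding alg_mult_def using k by (subst sum_square_skew) auto
  also have "\<dots> = (\<Sum>j=1..n. \<Sum>i=1..<j. c i j k * (x i * y j - x j * y i))"
  proof (intro sum.cong refl)
    fix i j assume "j \<in> {1..n}" "i \<in> {1..<j}"
    then have "c j i k = - c i j k" by (intro skew) auto
    then show "x i * y j * c i j k + x j * y i * c j i k = c i j k * (x i * y j - x j * y i)"
      by (simp add: algebra_simps)
  qed
  also have "\<dots> = (\<Sum>j=1..<k. \<Sum>i=1..<j. c i j k * (x i * y j - x j * y i))"
  proof (rule sum.mono_neutral_right)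
    show "{1..<k} \<subseteq> {1..n}" using k by auto
    show "\<forall>j\<in>{1..n} - {1..<k}. (\<Sum>i=1..<j. c i j k * (x i * y j - x j * y i)) = 0"
    proof
      fix j assume j: "j \<in> {1..n} - {1..<k}"
      have "c i j k = 0" if "i \<in> {1..<j}" for i
      proof (rule in_Tprime_triangular[OF T _ _ k])
        show "i \<in> {1..n}" "j \<in> {1..n}" "k \<le> max i j" using that j by auto
      qed
      then show "(\<Sum>i=1..<j. c i j k * (x i * y j - x j * y i)) = 0" by simp
    qed
  qed simp
  finally show ?thesis .
qed

lemma bvec_in_vsp: "i \<in> {1..n} \<Longrightarrow> bvec i \<in> vsp n"
  by (auto simp: vsp_def bvec_def)

lemma vsp_eqI:
  assumes "x \<in> vsp n" "y \<in> vsp n" "\<And>k. k \<in> {1..n} \<Longrightarrow> x k = y k"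
  shows "x = y"
proof
  fix k show "x k = y k"
    using assms unfolding vsp_def by (cases "k \<in> {1..n}") auto
qed

lemma lin_on_zero:
  assumes "lin_on n f"
  shows "f (\<lambda>k. 0) = (\<lambda>k. 0)"
proof -
  have smult: "\<forall>a. \<forall>x\<in>vsp n. f (\<lambda>k. a * x k) = (\<lambda>k. a * f x k)"
    using assms unfolding lin_on_def by blast
  have "(\<lambda>k. 0) \<in> vsp n" by (simp add: vsp_def)
  from smult[rule_format, OF this, of 0] show ?thesis by simp
qed

lemma vsp_basis_expansion:
  assumes "x \<in> vsp n"
  shows "x = (\<lambda>k. \<Sum>i=1..n. x i * bvec i k)"
proof
  fix k
  have "(\<Sum>i=1..n. x i * bvec i k) = (\<Sum>i=1..n. if i = k then x k else 0)"
    by (intro sum.cong) (auto simp: bvec_def)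
  also have "\<dots> = x k"
    using assms by (cases "k \<in> {1..n}") (auto simp: vsp_def)
  finally show "x k = (\<Sum>i=1..n. x i * bvec i k)" ..
qed

lemma lin_on_expansion:
  assumes lin: "lin_on n f" and x: "x \<in> vsp n"
  shows "f x = (\<lambda>k. \<Sum>i=1..n. x i * f (bvec i) k)"
proof -
  have add: "f (\<lambda>k. u k + v k) = (\<lambda>k. f u k + f v k)" if "u \<in> vsp n" "v \<in> vsp n" for u v
    using lin that unfolding lin_on_def by blast
  have smult: "f (\<lambda>k. a * u k) = (\<lambda>k. a * f u k)" if "u \<in> vsp n" for a u
    using lin that unfolding lin_on_def by blast
  have "m \<le> n \<Longrightarrow> f (\<lambda>k. \<Sum>i=1..m. x i * bvec i k) = (\<lambda>k. \<Sum>i=1..m. x i * f (bvec i) k)" for m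
  proof (induction m)
    case 0
    then show ?case using lin_on_zero[OF lin] by simp
  next
    case (Suc m)
    let ?s = "\<lambda>k. \<Sum>i=1..m. x i * bvec i k"
    have e: "bvec (Suc m) \<in> vsp n" using Suc.prems by (intro bvec_in_vsp) simp
    have "?s \<in> vsp n" using Suc.prems by (auto simp: vsp_def bvec_def intro!: sum.neutral)
    moreover have "(\<lambda>k. x (Suc m) * bvec (Suc m) k) \<in> vsp n" using e by (simp add: vsp_def)
    ultimately have "f (\<lambda>k. ?s k + x (Suc m) * bvec (Suc m) k)
        = (\<lambda>k. f ?s k + x (Suc m) * f (bvec (Suc m)) k)"
      by (simp add: add smult[OF e])
    then show ?case using Suc by simp
  qed
  then have "f (\<lambda>k. \<Sum>i=1..n. x i * bvec i k) = (\<lambda>k. \<Sum>i=1..n. x i * f (bvec i) k)"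
    by blast
  then show ?thesis using vsp_basis_expansion[OF x] by simp
qed

lemma lin_on_eq_on_vsp:
  assumes "lin_on n f" "lin_on n g" "\<And>i. i \<in> {1..n} \<Longrightarrow> f (bvec i) = g (bvec i)"
    and "x \<in> vsp n"
  shows "f x = g x"
  using assms by (simp add: lin_on_expansion)

lemma vsp_add: "x \<in> vsp n \<Longrightarrow> y \<in> vsp n \<Longrightarrow> (\<lambda>k. x k + y k) \<in> vsp n"
  and vsp_smult: "x \<in> vsp n \<Longrightarrow> (\<lambda>k. a * x k) \<in> vsp n"
  by (auto simp: vsp_def)

lemma lin_on_cong:
  assumes "\<And>x. x \<in> vsp n \<Longrightarrow> f x = g x"
  shows "lin_on n f \<longleftrightarrow> lin_on n g"
  unfolding lin_on_def by (simp add: assms vsp_add vsp_smult cong: ball_cong)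

lemma alg_mult_in_vsp: "alg_mult n c x y \<in> vsp n"
  by (simp add: alg_mult_def vsp_def)

lemma alg_mult_outside: "k \<notin> {1..n} \<Longrightarrow> alg_mult n c x y k = 0"
  unfolding alg_mult_def by (simp only: if_False)

lemma is_automorphism_cong:
  assumes "\<And>x. x \<in> vsp n \<Longrightarrow> f x = g x"
  shows "is_automorphism n c f \<longleftrightarrow> is_automorphism n c g"
proof -
  have "bij_betw f (vsp n) (vsp n) \<longleftrightarrow> bij_betw g (vsp n) (vsp n)"
    using assms by (rule bij_betw_cong)
  then show ?thesis
    using assms lin_on_cong[OF assms] alg_mult_in_vsp unfolding is_automorphism_def by simp
qed

lemma alg_mult_lower_cong:
  assumes T: "in_Tprime n c" and k: "k \<in> {1..n}"
    and "\<And>i. i < k \<Longrightarrow> x i = x' i" "\<And>i. i < k \<Longrightarrow> y i = y' i"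
  shows "alg_mult n c x y k = alg_mult n c x' y' k"
  using assms by (simp add: alg_mult_in_Tprime[OF T k])

lemma alg_mult_first_coords:
  assumes "in_Tprime n c" "k \<le> 2"
  shows "alg_mult n c x y k = 0"
proof (cases "k \<in> {1..n}")
  case True
  with assms show ?thesis by (auto simp: alg_mult_in_Tprime le_Suc_eq)
qed (simp add: alg_mult_outside)

definition shear :: "nat \<Rightarrow> complex \<Rightarrow> complex \<Rightarrow> (nat \<Rightarrow> complex) \<Rightarrow> (nat \<Rightarrow> complex)" where
  "shear n a b x = (\<lambda>k. x k + (if k = n then a * x 1 + b * x 2 else 0))"

lemma shear_basis:
  assumes "3 \<le> n"
  shows "shear n a b (bvec 1) = (\<lambda>k. bvec 1 k + a * bvec n k)"
    and "shear n a b (bvec 2) = (\<lambda>k. bvec 2 k + b * bvec n k)"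
    and "3 \<le> i \<Longrightarrow> shear n a b (bvec i) = bvec i"
  using assms by (auto simp: shear_def bvec_def)

lemma lin_on_shear: "lin_on n (shear n a b)"
proof -
  have "shear n a b x \<in> vsp n" if x: "x \<in> vsp n" for x
    unfolding vsp_def mem_Collect_eq
  proof (intro allI impI)
    fix k assume k: "k \<notin> {1..n}"
    then have "x k = 0" using x by (simp add: vsp_def)
    moreover have "x 1 = 0 \<and> x 2 = 0" if "k = n"
      using x k that by (simp add: vsp_def)
    ultimately show "shear n a b x k = 0" by (simp add: shear_def)
  qed
  moreover have "shear n a b (\<lambda>k. x k + y k) = (\<lambda>k. shear n a b x k + shear n a b y k)" for x y
    by (simp add: shear_def fun_eq_iff algebra_simps)
  moreover have "shear n a b (\<lambda>k. r * x k) = (\<lambda>k. r * shear n a b x k)" for r x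
    by (simp add: shear_def fun_eq_iff algebra_simps)
  ultimately show ?thesis unfolding lin_on_def by blast
qed

lemma bij_betw_shear:
  assumes "3 \<le> n"
  shows "bij_betw (shear n a b) (vsp n) (vsp n)"
proof (rule bij_betw_byWitness)
  have "shear n (- a) (- b) (shear n a b x) = x" "shear n a b (shear n (- a) (- b) x) = x" for x
    using assms by (auto simp: shear_def)
  then show "\<forall>x\<in>vsp n. shear n (- a) (- b) (shear n a b x) = x"
    "\<forall>x\<in>vsp n. shear n a b (shear n (- a) (- b) x) = x" by simp_all
  show "shear n a b ` vsp n \<subseteq> vsp n" "shear n (- a) (- b) ` vsp n \<subseteq> vsp n"
    using assms by (auto simp: shear_def vsp_def)
qed

lemma shear_alg_mult:
  assumes T: "in_Tprime n c"
  shows "shear n a b (alg_mult n c x y) = alg_mult n c (shear n a b x) (shear n a b y)"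
proof
  fix k
  have n: "3 \<le> n" using T by (simp add: in_Tprime_def)
  have "shear n a b (alg_mult n c x y) k = alg_mult n c x y k"
    using alg_mult_first_coords[OF T] by (simp add: shear_def)
  also have "\<dots> = alg_mult n c (shear n a b x) (shear n a b y) k"
  proof (cases "k \<in> {1..n}")
    case True
    show ?thesis by (rule alg_mult_lower_cong[OF T True]) (use True in \<open>auto simp: shear_def\<close>)
  qed (simp add: alg_mult_outside)
  finally show "shear n a b (alg_mult n c x y) k = alg_mult n c (shear n a b x) (shear n a b y) k" .
qed

lemma shear_is_automorphism:
  assumes "in_Tprime n c"
  shows "is_automorphism n c (shear n a b)"
proof -
  have "3 \<le> n" using assms by (simp add: in_Tprime_def)
  then show ?thesis unfolding is_automorphism_def
    using lin_on_shear bij_betw_shear shear_alg_mult[OF assms] by simp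
qed

lemma is_automorphism_if_shear_on_basis:
  assumes T: "in_Tprime n c" and lin: "lin_on n f"
    and f1: "f (bvec 1) = (\<lambda>k. bvec 1 k + a * bvec n k)"
    and f2: "f (bvec 2) = (\<lambda>k. bvec 2 k + b * bvec n k)"
    and fi: "\<forall>i. 3 \<le> i \<and> i \<le> n \<longrightarrow> f (bvec i) = bvec i"
  shows "is_automorphism n c f"
proof -
  have n: "3 \<le> n" using T by (simp add: in_Tprime_def)
  have on_basis: "f (bvec i) = shear n a b (bvec i)" if "i \<in> {1..n}" for i
  proof -
    have "i = 1 \<or> i = 2 \<or> 3 \<le> i" using that by auto
    then show ?thesis using that fi by (auto simp: shear_basis[OF n] f1 f2)
  qed
  have "f x = shear n a b x" if "x \<in> vsp n" for x
    using lin_on_eq_on_vsp[OF lin lin_on_shear on_basis that] .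
  then have "is_automorphism n c f \<longleftrightarrow> is_automorphism n c (shear n a b)"
    by (rule is_automorphism_cong)
  with shear_is_automorphism[OF T] show ?thesis by simp
qed

lemma is_automorphism_basis_nonzero:
  assumes "is_automorphism n c f" "i \<in> {1..n}"
  shows "f (bvec i) \<noteq> (\<lambda>k. 0)"
proof
  assume "f (bvec i) = (\<lambda>k. 0)"
  moreover have "lin_on n f" using assms(1) by (simp add: is_automorphism_def)
  ultimately have "f (bvec i) = f (\<lambda>k. 0)" by (simp add: lin_on_zero)
  moreover have "inj_on f (vsp n)" using assms(1) by (simp add: is_automorphism_def bij_betw_def)
  moreover have "(\<lambda>k. 0) \<in> vsp n" by (simp add: vsp_def)
  ultimately have "bvec i = (\<lambda>k. 0)" using bvec_in_vsp[OF assms(2)] by (simp add: inj_on_eq_iff)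
  then show False by (metis bvec_def zero_neq_one)
qed

lemma vsp7_eqI:
  assumes "x \<in> vsp 7" "y \<in> vsp 7"
    and "x 1 = y 1" "x 2 = y 2" "x 3 = y 3" "x 4 = y 4" "x 5 = y 5" "x 6 = y 6" "x 7 = y 7"
  shows "x = y"
proof (rule vsp_eqI[OF assms(1,2)])
  fix k :: nat assume "k \<in> {1..7}"
  then have "k = 1 \<or> k = 2 \<or> k = 3 \<or> k = 4 \<or> k = 5 \<or> k = 6 \<or> k = 7" by auto
  then show "x k = y k" using assms(3-) by (elim disjE) simp_all
qed

locale T7_algebra =
  fixes c :: "nat \<Rightarrow> nat \<Rightarrow> nat \<Rightarrow> complex"
  assumes in_T: "in_Tprime 7 c"
    and c134: "c 1 3 4 = 0" and c145: "c 1 4 5 = 0" and c156: "c 1 5 6 = 0" and c245: "c 2 4 5 = 0"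
    and c256: "c 2 5 6 = 0" and c146: "c 1 4 6 = 0" and c246: "c 2 4 6 = 0" and c136: "c 1 3 6 = 0"
    and nonzero: "c 1 3 5 * c 3 5 6 * c 4 6 7 \<noteq> 0"
begin

lemma product_coords:
  assumes "alg_mult 7 c x y = z"
  shows "z 1 = 0" "z 2 = 0" "z 3 = x 1 * y 2 - x 2 * y 1" "z 4 = x 2 * y 3 - x 3 * y 2"
    "z 5 = c 1 3 5 * (x 1 * y 3 - x 3 * y 1) + (x 3 * y 4 - x 4 * y 3)"
    "z 6 = c 3 5 6 * (x 3 * y 5 - x 5 * y 3) + (x 4 * y 5 - x 5 * y 4)"
    "z 7 = c 1 3 7 * (x 1 * y 3 - x 3 * y 1) + c 1 4 7 * (x 1 * y 4 - x 4 * y 1)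
      + c 1 5 7 * (x 1 * y 5 - x 5 * y 1) + c 1 6 7 * (x 1 * y 6 - x 6 * y 1)
      + c 2 4 7 * (x 2 * y 4 - x 4 * y 2) + c 2 5 7 * (x 2 * y 5 - x 5 * y 2)
      + c 2 6 7 * (x 2 * y 6 - x 6 * y 2) + c 3 5 7 * (x 3 * y 5 - x 5 * y 3)
      + c 3 6 7 * (x 3 * y 6 - x 6 * y 3) + c 4 6 7 * (x 4 * y 6 - x 6 * y 4)
      + (x 5 * y 6 - x 6 * y 5)"
proof -
  have consecutive: "c 1 2 k = (if k = 3 then 1 else 0)" "c 2 3 k = (if k = 4 then 1 else 0)"
    "c 3 4 k = (if k = 5 then 1 else 0)" "c 4 5 k = (if k = 6 then 1 else 0)"
    "c 5 6 k = (if k = 7 then 1 else 0)" if "k \<in> {1..7}" for k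
    using in_Tprime_consecutive[OF in_T _ _ that, of 1] in_Tprime_consecutive[OF in_T _ _ that, of 2]
      in_Tprime_consecutive[OF in_T _ _ that, of 3] in_Tprime_consecutive[OF in_T _ _ that, of 4]
      in_Tprime_consecutive[OF in_T _ _ that, of 5]
    by simp_all
  note formula = alg_mult_in_Tprime[OF in_T, of _ x y, unfolded assms]
  show "z 1 = 0" "z 2 = 0" "z 3 = x 1 * y 2 - x 2 * y 1" "z 4 = x 2 * y 3 - x 3 * y 2"
    "z 5 = c 1 3 5 * (x 1 * y 3 - x 3 * y 1) + (x 3 * y 4 - x 4 * y 3)"
    "z 6 = c 3 5 6 * (x 3 * y 5 - x 5 * y 3) + (x 4 * y 5 - x 5 * y 4)"
    by (simp_all add: formula sum.atLeast_Suc_lessThan consecutive c134 c145 c156 c245 c256 c146 c246 c136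
        algebra_simps)
  show "z 7 = c 1 3 7 * (x 1 * y 3 - x 3 * y 1) + c 1 4 7 * (x 1 * y 4 - x 4 * y 1)
      + c 1 5 7 * (x 1 * y 5 - x 5 * y 1) + c 1 6 7 * (x 1 * y 6 - x 6 * y 1)
      + c 2 4 7 * (x 2 * y 4 - x 4 * y 2) + c 2 5 7 * (x 2 * y 5 - x 5 * y 2)
      + c 2 6 7 * (x 2 * y 6 - x 6 * y 2) + c 3 5 7 * (x 3 * y 5 - x 5 * y 3)
      + c 3 6 7 * (x 3 * y 6 - x 6 * y 3) + c 4 6 7 * (x 4 * y 6 - x 6 * y 4)
      + (x 5 * y 6 - x 6 * y 5)"
    by (simp add: formula sum.atLeast_Suc_lessThan consecutive algebra_simps)
qed

end

locale T7_automorphism = T7_algebra +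
  fixes f :: "(nat \<Rightarrow> complex) \<Rightarrow> (nat \<Rightarrow> complex)"
  assumes aut: "is_automorphism 7 c f"
begin

definition col :: "nat \<Rightarrow> nat \<Rightarrow> complex" where
  "col i = f (bvec i)"

definition minor12 :: complex where
  "minor12 = col 1 1 * col 2 2 - col 1 2 * col 2 1"

lemma lin: "lin_on 7 f"
  using aut by (simp add: is_automorphism_def)

lemma col_in_vsp: "i \<in> {1..7} \<Longrightarrow> col i \<in> vsp 7"
  using lin bvec_in_vsp unfolding lin_on_def col_def by blast

lemma col_mult:
  assumes "i \<in> {1..7}" "j \<in> {1..7}"
  shows "alg_mult 7 c (col i) (col j) = (\<lambda>m. \<Sum>k=1..7. alg_mult 7 c (bvec i) (bvec j) k * col k m)"
proof -
  have "alg_mult 7 c (col i) (col j) = f (alg_mult 7 c (bvec i) (bvec j))"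
    using aut bvec_in_vsp[OF assms(1)] bvec_in_vsp[OF assms(2)]
    unfolding is_automorphism_def col_def by simp
  also have "\<dots> = (\<lambda>m. \<Sum>k=1..7. alg_mult 7 c (bvec i) (bvec j) k * col k m)"
    using lin_on_expansion[OF lin alg_mult_in_vsp] by (simp add: col_def)
  finally show ?thesis .
qed

lemma col_products:
  shows "alg_mult 7 c (col 1) (col 2) = col 3"
    and "alg_mult 7 c (col 2) (col 3) = col 4"
    and "alg_mult 7 c (col 3) (col 4) = col 5"
    and "alg_mult 7 c (col 4) (col 5) = col 6"
    and "alg_mult 7 c (col 5) (col 6) = col 7"
    and "alg_mult 7 c (col 1) (col 3) = (\<lambda>m. c 1 3 5 * col 5 m + c 1 3 7 * col 7 m)"
    and "alg_mult 7 c (col 1) (col 4) = (\<lambda>m. c 1 4 7 * col 7 m)"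
    and "alg_mult 7 c (col 1) (col 5) = (\<lambda>m. c 1 5 7 * col 7 m)"
    and "alg_mult 7 c (col 2) (col 4) = (\<lambda>m. c 2 4 7 * col 7 m)"
    and "alg_mult 7 c (col 2) (col 5) = (\<lambda>m. c 2 5 7 * col 7 m)"
    and "alg_mult 7 c (col 3) (col 5) = (\<lambda>m. c 3 5 6 * col 6 m + c 3 5 7 * col 7 m)"
    and "alg_mult 7 c (col 4) (col 6) = (\<lambda>m. c 4 6 7 * col 7 m)"
  by (simp_all add: col_mult product_coords[OF refl] bvec_def sum.atLeast_Suc_atMost)

lemma col3_coords:
  "col 3 1 = 0" "col 3 2 = 0" "col 3 3 = minor12"
  "col 3 4 = col 1 2 * col 2 3 - col 1 3 * col 2 2"
  "col 3 5 = c 1 3 5 * (col 1 1 * col 2 3 - col 1 3 * col 2 1) + (col 1 3 * col 2 4 - col 1 4 * col 2 3)"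
  using product_coords[OF col_products(1)] by (simp_all add: minor12_def)

lemma col4_coords:
  "col 4 1 = 0" "col 4 2 = 0" "col 4 3 = 0" "col 4 4 = col 2 2 * minor12"
  "col 4 5 = c 1 3 5 * (col 2 1 * minor12) + (col 2 3 * col 3 4 - col 2 4 * minor12)"
  using product_coords[OF col_products(2)] col3_coords by (simp_all add: mult.commute)

lemma col5_coords:
  "col 5 1 = 0" "col 5 2 = 0" "col 5 3 = 0" "col 5 4 = 0" "col 5 5 = minor12 * col 4 4"
  "col 5 6 = c 3 5 6 * (minor12 * col 4 5) + (col 3 4 * col 4 5 - col 3 5 * col 4 4)"
  using product_coords[OF col_products(3)] col3_coords col4_coords by simp_all

lemma col6_coords:
  "col 6 1 = 0" "col 6 2 = 0" "col 6 3 = 0" "col 6 4 = 0" "col 6 5 = 0" "col 6 6 = col 4 4 * col 5 5"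
  using product_coords[OF col_products(4)] col4_coords col5_coords by simp_all

lemma col7_coords:
  "col 7 1 = 0" "col 7 2 = 0" "col 7 3 = 0" "col 7 4 = 0" "col 7 5 = 0" "col 7 6 = 0"
  "col 7 7 = col 5 5 * col 6 6"
  using product_coords[OF col_products(5)] col5_coords col6_coords by simp_all

lemma col7_7_nonzero: "col 7 7 \<noteq> 0"
proof
  assume "col 7 7 = 0"
  then have "col 7 = (\<lambda>k. 0)"
    by (intro vsp7_eqI col_in_vsp) (simp_all add: vsp_def col7_coords)
  then show False using is_automorphism_basis_nonzero[OF aut, of 7] by (simp add: col_def)
qed

lemma diagonal_nonzero:
  "minor12 \<noteq> 0" "col 2 2 \<noteq> 0" "col 4 4 \<noteq> 0" "col 5 5 \<noteq> 0" "col 6 6 \<noteq> 0"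
  using col7_7_nonzero by (simp_all add: col7_coords col6_coords col5_coords col4_coords)

lemma constants_nonzero: "c 1 3 5 \<noteq> 0" "c 3 5 6 \<noteq> 0" "c 4 6 7 \<noteq> 0"
  using nonzero by simp_all

lemma col1_2_eq_0: "col 1 2 = 0"
proof -
  have "col 1 2 * minor12 = 0"
    using product_coords(4)[OF col_products(6)] col3_coords col5_coords col7_coords by simp
  then show ?thesis using diagonal_nonzero by simp
qed

lemma col12_entries_3_to_5_eq_0:
  "col 1 3 = 0" "col 2 3 = 0" "col 1 4 = 0" "col 2 4 = 0" "col 1 5 = 0" "col 2 5 = 0"
proof -
  have "col 1 3 * col 4 4 = 0"
    using product_coords(5)[OF col_products(7)] col4_coords col7_coords by simp
  then show c13: "col 1 3 = 0" using diagonal_nonzero by simp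
  have "col 2 3 * col 4 4 = 0"
    using product_coords(5)[OF col_products(9)] col4_coords col7_coords by simp
  then show c23: "col 2 3 = 0" using diagonal_nonzero by simp
  have "col 1 4 * col 5 5 = 0"
    using product_coords(6)[OF col_products(8)] col5_coords col7_coords c13 by simp
  then show c14: "col 1 4 = 0" using diagonal_nonzero by simp
  have "col 2 4 * col 5 5 = 0"
    using product_coords(6)[OF col_products(10)] col5_coords col7_coords c23 by simp
  then show c24: "col 2 4 = 0" using diagonal_nonzero by simp
  have "col 1 5 * col 4 4 = 0"
    using product_coords(6)[OF col_products(7)] col4_coords col7_coords c13 c14 by simp
  then show "col 1 5 = 0" using diagonal_nonzero by simp
  have "col 2 5 * col 4 4 = 0"
    using product_coords(6)[OF col_products(9)] col4_coords col7_coords c23 c24 by simp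
  then show "col 2 5 = 0" using diagonal_nonzero by simp
qed

lemma col2_2_eq_1: "col 2 2 = 1"
proof -
  have "c 3 5 6 * (col 4 4 * col 5 5) = c 3 5 6 * (minor12 * col 5 5)"
    using product_coords(6)[OF col_products(11)] col3_coords col5_coords col6_coords col7_coords
      col1_2_eq_0 col12_entries_3_to_5_eq_0 by simp
  then have "1 * minor12 = col 2 2 * minor12"
    using constants_nonzero diagonal_nonzero by (simp add: col4_coords)
  then show ?thesis using diagonal_nonzero by (simp only: mult_cancel_right) simp
qed

lemma col2_1_eq_0: "col 2 1 = 0"
proof -
  have "c 1 3 5 * col 5 6 = 0"
    using product_coords(6)[OF col_products(6)] col3_coords col5_coords col7_coords
      col1_2_eq_0 col12_entries_3_to_5_eq_0 by simp
  then have "c 1 3 5 * (c 3 5 6 * (minor12 * (c 1 3 5 * (col 2 1 * minor12)))) = 0"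
    using col3_coords col4_coords col5_coords col1_2_eq_0 col12_entries_3_to_5_eq_0 by simp
  then show ?thesis using constants_nonzero diagonal_nonzero by simp
qed

lemma col1_1_eq_1: "col 1 1 = 1"
proof -
  have "c 4 6 7 * (col 5 5 * col 6 6) = c 4 6 7 * (col 4 4 * col 6 6)"
    using product_coords(7)[OF col_products(12)] col4_coords col6_coords col7_coords
      col3_coords col1_2_eq_0 col12_entries_3_to_5_eq_0 col2_1_eq_0 by simp
  then have "col 4 4 = col 5 5" using constants_nonzero diagonal_nonzero by simp
  then have "col 1 1 * 1 = col 1 1 * col 1 1"
    using col4_coords col5_coords col1_2_eq_0 col2_2_eq_1 by (simp add: minor12_def)
  moreover have "col 1 1 \<noteq> 0"
    using diagonal_nonzero col1_2_eq_0 by (simp add: minor12_def)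
  ultimately show ?thesis by (simp only: mult_cancel_left) simp
qed

lemma col_diagonal_eq_1: "col 3 3 = 1" "col 4 4 = 1" "col 5 5 = 1" "col 6 6 = 1" "col 7 7 = 1"
  using col3_coords col4_coords col5_coords col6_coords col7_coords col1_1_eq_1 col1_2_eq_0 col2_2_eq_1
  by (simp_all add: minor12_def)

lemma col_off_diagonal_eq_0:
  "col 4 5 = 0" "col 5 6 = 0" "col 1 6 = 0" "col 2 6 = 0"
  "col 3 6 = 0" "col 3 7 = 0" "col 4 6 = 0" "col 4 7 = 0" "col 5 7 = 0" "col 6 7 = 0"
proof -
  note known = col3_coords col4_coords col5_coords col6_coords col7_coords col_diagonal_eq_1
    col1_1_eq_1 col1_2_eq_0 col12_entries_3_to_5_eq_0 col2_1_eq_0 col2_2_eq_1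
  show c45: "col 4 5 = 0" and c56: "col 5 6 = 0" using known by simp_all
  show c16: "col 1 6 = 0"
    using product_coords(7)[OF col_products(8)] known c56 by simp
  show c26: "col 2 6 = 0"
    using product_coords(7)[OF col_products(10)] known c56 by simp
  show c36: "col 3 6 = 0" and "col 3 7 = 0"
    using product_coords(6,7)[OF col_products(1)] known c16 c26 by simp_all
  show c46: "col 4 6 = 0" and "col 4 7 = 0"
    using product_coords(6,7)[OF col_products(2)] known c26 c36 by simp_all
  show c57: "col 5 7 = 0" using product_coords(7)[OF col_products(3)] known c36 c46 by simp
  show "col 6 7 = 0" using product_coords(7)[OF col_products(4)] known c46 c57 by simp
qed

lemma basis_images:
  shows "f (bvec 1) = (\<lambda>k. bvec 1 k + f (bvec 1) 7 * bvec 7 k)"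
    and "f (bvec 2) = (\<lambda>k. bvec 2 k + f (bvec 2) 7 * bvec 7 k)"
    and "3 \<le> i \<Longrightarrow> i \<le> 7 \<Longrightarrow> f (bvec i) = bvec i"
proof -
  note entries = col3_coords col4_coords col5_coords col6_coords col7_coords col_diagonal_eq_1
    col1_1_eq_1 col1_2_eq_0 col12_entries_3_to_5_eq_0 col2_1_eq_0 col2_2_eq_1 col_off_diagonal_eq_0
  have shifted: "(\<lambda>k. bvec i k + a * bvec 7 k) \<in> vsp 7" if "i \<in> {1..7}" for i a
    using bvec_in_vsp[OF that] bvec_in_vsp[of 7 7] by (simp add: vsp_add vsp_smult)
  have "col 1 = (\<lambda>k. bvec 1 k + col 1 7 * bvec 7 k)"
    by (intro vsp7_eqI col_in_vsp shifted) (simp_all add: bvec_def entries minor12_def)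
  then show "f (bvec 1) = (\<lambda>k. bvec 1 k + f (bvec 1) 7 * bvec 7 k)" by (simp add: col_def)
  have "col 2 = (\<lambda>k. bvec 2 k + col 2 7 * bvec 7 k)"
    by (intro vsp7_eqI col_in_vsp shifted) (simp_all add: bvec_def entries minor12_def)
  then show "f (bvec 2) = (\<lambda>k. bvec 2 k + f (bvec 2) 7 * bvec 7 k)" by (simp add: col_def)
  assume "3 \<le> i" "i \<le> 7"
  then have "i = 3 \<or> i = 4 \<or> i = 5 \<or> i = 6 \<or> i = 7" by auto
  moreover have "col 3 = bvec 3" "col 4 = bvec 4" "col 5 = bvec 5" "col 6 = bvec 6" "col 7 = bvec 7"
    by (intro vsp7_eqI col_in_vsp bvec_in_vsp; simp add: bvec_def entries minor12_def)+
  ultimately show "f (bvec i) = bvec i" by (auto simp: col_def)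
qed

end

theorem mainTheorem17:
  fixes c :: "nat \<Rightarrow> nat \<Rightarrow> nat \<Rightarrow> complex"
  assumes "in_Tprime 7 c"
    and "c 1 3 4 = 0" and "c 1 4 5 = 0" and "c 1 5 6 = 0" and "c 2 4 5 = 0"
    and "c 2 5 6 = 0" and "c 1 4 6 = 0" and "c 2 4 6 = 0" and "c 1 3 6 = 0"
    and "c 1 3 5 * c 3 5 6 * c 4 6 7 \<noteq> 0"
  shows "\<forall>f. is_automorphism 7 c f \<longleftrightarrow>
    (lin_on 7 f \<and> (\<exists>a71 a72.
        f (bvec 1) = (\<lambda>k. bvec 1 k + a71 * bvec 7 k)
      \<and> f (bvec 2) = (\<lambda>k. bvec 2 k + a72 * bvec 7 k)
      \<and> (\<forall>i. 3 \<le> i \<and> i \<le> 7 \<longrightarrow> f (bvec i) = bvec i)))"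
proof (intro allI iffI)
  fix f
  assume "is_automorphism 7 c f"
  then interpret T7_automorphism c f
    by (intro T7_automorphism.intro T7_algebra.intro T7_automorphism_axioms.intro assms)
  show "lin_on 7 f \<and> (\<exists>a71 a72.
      f (bvec 1) = (\<lambda>k. bvec 1 k + a71 * bvec 7 k)
      \<and> f (bvec 2) = (\<lambda>k. bvec 2 k + a72 * bvec 7 k)
      \<and> (\<forall>i. 3 \<le> i \<and> i \<le> 7 \<longrightarrow> f (bvec i) = bvec i))"
    using lin basis_images by blast
next
  fix f
  assume "lin_on 7 f \<and> (\<exists>a71 a72.
      f (bvec 1) = (\<lambda>k. bvec 1 k + a71 * bvec 7 k)
      \<and> f (bvec 2) = (\<lambda>k. bvec 2 k + a72 * bvec 7 k)
      \<and> (\<forall>i. 3 \<le> i \<and> i \<le> 7 \<longrightarrow> f (bvec i) = bvec i))"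
  then show "is_automorphism 7 c f"
    using is_automorphism_if_shear_on_basis[OF assms(1)] by blast
qed

end
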